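(* Let $\omega$ be a non-principal ultrafilter and $d=(d_n)$ a scaling sequence with $\lim_\omega d_n=\infty$. The inclusion $i:K_2\to G$ induces a bi-Lipschitz embedding $\hat{i}:Con^\omega(K_2,d)\hookrightarrow Con^\omega(G,d)$.
   Context: $G=F_2(a,b)*_{K(a,b)=K(x,y)}F_2(x,y)$ with word metric for $\{a^{\pm1},b^{\pm1},x^{\pm1},y^{\pm1}\}$, where $F_2(a,b)$, $F_2(x,y)$ are copies of the free group of rank 2 and $K(x,y)$ is the image of $K(a,b)$ under $a\mapsto x,b\mapsto y$. $K=\bigcup_nK_n$ with ($|h|$ word length, $(h,k)_1$ Gromov product at $1$, $(h,H)_1=\max_{k\in H}(h,k)_1$, $T(n)$ the tower of $2$'s of height $n$, $U(n)(a,b)=[a^{T(n)+1}b^{T(n)+1}]\cdots[a^{T(n+1)}b^{T(n+1)}]$): $K_1=\langle g_1\rangle$, $g_1$ not a proper power; $K_{n+1}=\langle K_n,g_{n+1}\rangle$ where $g_{n+1}\in F_2\setminus K_n$ is cyclically reduced, no proper power of $a$ or $b$ lies in $K_n$, $(g_{n+1},K_n)_1=\min_{h\in F_2\setminus K_n}(h,K_n)_1$, and $g_{n+1}=h_{n+1}c_{n+1}U(N(n))d_{n+1}$ with $h_{n+1}$ an initial segment of a geodesic ray $r$ from $1$ minimizing $(r,K_n)_1$, $(h_{n+1},K_n)_1$ equal to that minimum, $|h_{n+1}|=(h_{n+1},K_n)_1+1$; $N(n)$ at least twice the maximal $m$ with $a^m$ or $b^m$ a subword of a freely reduced word of $K_n$,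 and $N(n)>|h_{n+1}|$; $c_{n+1},d_{n+1}\in\{a^{\pm1},b^{\pm1}\}$ making $g_{n+1}$ cyclically reduced. $K_2=\langle g_1,g_2\rangle\subset F_2(a,b)\subset G$ is a free group of rank 2, with a word metric for a finite generating set. Asymptotic cones are ultralimits of the metrics scaled by $1/d_n$, based at the identity. *)

theory Defs
  imports Complex_Main "HOL-Library.Extended_Nat"
begin

text \<open>A letter (i, False) is the generator number i, (i, True) its inverse.
  Generators: a = 0, b = 1, x = 2, y = 3.\<close>

type_synonym letter = "nat \<times> bool"
type_synonym word = "letter list"

definition inv_letter :: "letter \<Rightarrow> letter" where
  "inv_letter l = (fst l, \<not> snd l)"

fun reduce :: "word \<Rightarrow> word" where
  "reduce [] = []"
| "reduce (l # w) = (case reduce w of [] \<Rightarrow> [l]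
      | m # v \<Rightarrow> (if m = inv_letter l then v else l # m # v))"

definition reduced :: "word \<Rightarrow> bool" where
  "reduced w \<longleftrightarrow> (\<forall>i. Suc i < length w \<longrightarrow> w ! Suc i \<noteq> inv_letter (w ! i))"

definition cyc_reduced :: "word \<Rightarrow> bool" where
  "cyc_reduced w \<longleftrightarrow> reduced w \<and> (w \<noteq> [] \<longrightarrow> last w \<noteq> inv_letter (hd w))"

definition winv :: "word \<Rightarrow> word" where
  "winv w = rev (map inv_letter w)"

definition fmul :: "word \<Rightarrow> word \<Rightarrow> word" where
  "fmul u v = reduce (u @ v)"

fun fpow :: "word \<Rightarrow> nat \<Rightarrow> word" where
  "fpow u 0 = []"
| "fpow u (Suc m) = fmul u (fpow u m)"

definition FG :: "nat \<Rightarrow> word set" where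
  "FG k = {w. reduced w \<and> (\<forall>l \<in> set w. fst l < k)}"

abbreviation F2 :: "word set" where "F2 \<equiv> FG 2"
abbreviation F4 :: "word set" where "F4 \<equiv> FG 4"

definition gen_a :: letter where "gen_a = (0, False)"
definition gen_b :: letter where "gen_b = (1, False)"

inductive_set gen_sub :: "word set \<Rightarrow> word set" for S where
  one: "[] \<in> gen_sub S"
| gen: "s \<in> S \<Longrightarrow> s \<in> gen_sub S"
| mul: "u \<in> gen_sub S \<Longrightarrow> v \<in> gen_sub S \<Longrightarrow> fmul u v \<in> gen_sub S"
| inv: "u \<in> gen_sub S \<Longrightarrow> winv u \<in> gen_sub S"

inductive_set ncl4 :: "word set \<Rightarrow> word set" for R where
  one: "[] \<in> ncl4 R"
| rel: "r \<in> R \<Longrightarrow> r \<in> ncl4 R"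
| mul: "u \<in> ncl4 R \<Longrightarrow> v \<in> ncl4 R \<Longrightarrow> fmul u v \<in> ncl4 R"
| inv: "u \<in> ncl4 R \<Longrightarrow> winv u \<in> ncl4 R"
| conj: "u \<in> ncl4 R \<Longrightarrow> g \<in> F4 \<Longrightarrow> fmul (fmul g u) (winv g) \<in> ncl4 R"

definition proper_power :: "word \<Rightarrow> bool" where
  "proper_power g \<longleftrightarrow> (\<exists>u m. u \<in> F2 \<and> m \<ge> 2 \<and> g = fpow u m)"

definition has_power_subword :: "letter \<Rightarrow> nat \<Rightarrow> word \<Rightarrow> bool" where
  "has_power_subword l m w \<longleftrightarrow> (\<exists>p s. w = p @ replicate m l @ s)"

definition gprod :: "word \<Rightarrow> word \<Rightarrow> nat" where
  "gprod h k = (length h + length k - length (fmul (winv h) k)) div 2"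

definition gprod_set :: "word \<Rightarrow> word set \<Rightarrow> nat" where
  "gprod_set h H = Max ((\<lambda>k. gprod h k) ` H)"

definition geod_ray :: "(nat \<Rightarrow> letter) \<Rightarrow> bool" where
  "geod_ray r \<longleftrightarrow> (\<forall>t. fst (r t) < 2 \<and> r (Suc t) \<noteq> inv_letter (r t))"

definition ray_prefix :: "(nat \<Rightarrow> letter) \<Rightarrow> nat \<Rightarrow> word" where
  "ray_prefix r t = map r [0..<t]"

definition ray_gprod_set :: "(nat \<Rightarrow> letter) \<Rightarrow> word set \<Rightarrow> enat" where
  "ray_gprod_set r H = (SUP t. enat (gprod_set (ray_prefix r t) H))"

fun tower :: "nat \<Rightarrow> nat" where
  "tower 0 = 1"
| "tower (Suc n) = 2 ^ tower n"

definition Uword :: "nat \<Rightarrow> word" where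
  "Uword n = concat (map (\<lambda>k. replicate k gen_a @ replicate k gen_b)
                         [Suc (tower n) ..< Suc (tower (Suc n))])"

definition Kn :: "(nat \<Rightarrow> word) \<Rightarrow> nat \<Rightarrow> word set" where
  "Kn g n = gen_sub (g ` {1..n})"

definition Kall :: "(nat \<Rightarrow> word) \<Rightarrow> word set" where
  "Kall g = (\<Union>n\<in>{1..}. Kn g n)"

definition to_xy :: "word \<Rightarrow> word" where
  "to_xy w = map (\<lambda>l. (fst l + 2, snd l)) w"

text \<open>G = F(a,b,x,y) / N with N the normal closure of {k(a,b) k(x,y)^-1 : k in K}.\<close>
definition amalg_rel :: "(nat \<Rightarrow> word) \<Rightarrow> word set" where
  "amalg_rel g = ncl4 ((\<lambda>k. fmul k (winv (to_xy k))) ` Kall g)"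

text \<open>Word length in G (generators a,b,x,y and inverses) of the image of w.\<close>
definition wlG :: "(nat \<Rightarrow> word) \<Rightarrow> word \<Rightarrow> nat" where
  "wlG g w = (LEAST n. \<exists>v. length v = n \<and> (\<forall>l\<in>set v. fst l < 4)
                 \<and> fmul (winv w) (reduce v) \<in> amalg_rel g)"

definition distG :: "(nat \<Rightarrow> word) \<Rightarrow> word \<Rightarrow> word \<Rightarrow> nat" where
  "distG g u v = wlG g (fmul (winv u) v)"

definition wlS :: "word set \<Rightarrow> word \<Rightarrow> nat" where
  "wlS S k = (LEAST n. \<exists>ws. length ws = n \<and> set ws \<subseteq> S \<union> winv ` S
                 \<and> foldr fmul ws [] = k)"

definition distS :: "word set \<Rightarrow> word \<Rightarrow> word \<Rightarrow> nat" where
  "distS S u v = wlS S (fmul (winv u) v)"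

definition nonprincipal_ultrafilter :: "nat filter \<Rightarrow> bool" where
  "nonprincipal_ultrafilter F \<longleftrightarrow> F \<noteq> bot
     \<and> (\<forall>P. eventually P F \<or> eventually (\<lambda>n. \<not> P n) F)
     \<and> (\<forall>m. eventually (\<lambda>n. n \<noteq> m) F)"

text \<open>Ultralimit (exists and is unique for F-bounded real sequences).\<close>
definition ulim :: "nat filter \<Rightarrow> (nat \<Rightarrow> real) \<Rightarrow> real" where
  "ulim F f = Lim F f"

text \<open>A sequence of points, given by their distances to the base point 1,
  defines a point of the asymptotic cone iff these distances are O(d_n) F-a.s.\<close>
definition cone_admissible :: "nat filter \<Rightarrow> (nat \<Rightarrow> real) \<Rightarrow> (nat \<Rightarrow> real) \<Rightarrow> bool" where
  "cone_admissible F d f \<longleftrightarrow> (\<exists>C. eventually (\<lambda>n. f n \<le> C * d n) F)"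

end

theory Submission imports Defs "HOL-Analysis.Elementary_Topology" begin

text \<open>Folding x \<mapsto> a, y \<mapsto> b is a retraction of G onto F_2(a,b) that does not increase
  word length, so F_2(a,b), and with it K_2, is isometrically embedded in G.
  On the other hand a finitely generated subgroup H of a free group is undistorted: every
  prefix of a reduced word u \<in> H lies at bounded distance from H, so u is a product of |u|
  elements of H of bounded length, whence |u|_S \<le> M |u|. Thus the word metrics of G and
  of K_2 are bi-Lipschitz equivalent on K_2, and this survives rescaling by d_n and
  passing to ultralimits.\<close>

section \<open>Free reduction\<close>

definition rstep :: "letter \<Rightarrow> word \<Rightarrow> word" where
  "rstep l x = (case x of [] \<Rightarrow> [l] | m # v \<Rightarrow> (if m = inv_letter l then v else l # m # v))"

lemma reduce_Cons: "reduce (l # w) = rstep l (reduce w)"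
  by (simp add: rstep_def)

declare reduce.simps(2)[simp del]

lemma inv_letter_inv_letter [simp]: "inv_letter (inv_letter l) = l"
  by (simp add: inv_letter_def)

lemma reduced_Nil [simp]: "reduced []"
  by (simp add: reduced_def)

lemma reduced_Cons: "reduced (l # w) \<longleftrightarrow> reduced w \<and> (w \<noteq> [] \<longrightarrow> hd w \<noteq> inv_letter l)"
proof
  assume a: "reduced (l # w)"
  have "reduced w" unfolding reduced_def
  proof (intro allI impI)
    fix i assume "Suc i < length w"
    with a[unfolded reduced_def, rule_format, of "Suc i"]
    show "w ! Suc i \<noteq> inv_letter (w ! i)" by simp
  qed
  moreover have "w \<noteq> [] \<longrightarrow> hd w \<noteq> inv_letter l"
    using a[unfolded reduced_def, rule_format, of 0] by (cases w) auto
  ultimately show "reduced w \<and> (w \<noteq> [] \<longrightarrow> hd w \<noteq> inv_letter l)" by blast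
next
  assume a: "reduced w \<and> (w \<noteq> [] \<longrightarrow> hd w \<noteq> inv_letter l)"
  show "reduced (l # w)" unfolding reduced_def
  proof (intro allI impI)
    fix i assume i: "Suc i < length (l # w)"
    show "(l # w) ! Suc i \<noteq> inv_letter ((l # w) ! i)"
    proof (cases i)
      case 0 then show ?thesis using a i by (cases w) auto
    next
      case (Suc j) then show ?thesis using a i by (auto simp: reduced_def)
    qed
  qed
qed

lemma reduced_rstep: "reduced x \<Longrightarrow> reduced (rstep l x)"
  by (auto simp: rstep_def reduced_Cons split: list.splits)

lemma reduced_reduce: "reduced (reduce w)"
  by (induction w) (auto simp: reduce_Cons reduced_rstep)

lemma reduce_id: "reduced w \<Longrightarrow> reduce w = w"
  by (induction w) (auto simp: reduce_Cons rstep_def reduced_Cons split: list.splits)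

lemma reduce_reduce [simp]: "reduce (reduce w) = reduce w"
  by (rule reduce_id[OF reduced_reduce])

lemma rstep_cancel: "reduced y \<Longrightarrow> rstep l (rstep (inv_letter l) y) = y"
  by (auto simp: rstep_def reduced_Cons split: list.splits)

lemma reduce_append_right: "reduce (u @ v) = reduce (u @ reduce v)"
  by (induction u) (auto simp: reduce_Cons)

lemma reduce_rstep_append: "reduce (rstep l x @ v) = rstep l (reduce (x @ v))"
proof (cases x)
  case Nil then show ?thesis by (simp add: rstep_def reduce_Cons)
next
  case (Cons m x')
  show ?thesis
  proof (cases "m = inv_letter l")
    case True
    have "rstep l (reduce (x @ v)) = rstep l (rstep (inv_letter l) (reduce (x' @ v)))"
      using Cons True by (simp add: reduce_Cons)
    also have "\<dots> = reduce (x' @ v)" by (rule rstep_cancel[OF reduced_reduce])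
    finally show ?thesis using Cons True by (simp add: rstep_def)
  next
    case False then show ?thesis using Cons by (simp add: rstep_def reduce_Cons)
  qed
qed

lemma reduce_append_left: "reduce (u @ v) = reduce (reduce u @ v)"
  by (induction u) (auto simp: reduce_Cons reduce_rstep_append)

lemma reduce_append_both: "reduce (u @ v) = reduce (reduce u @ reduce v)"
  by (metis reduce_append_left reduce_append_right)

lemma reduce_append_assoc: "reduce (u @ v @ w) = reduce (reduce (u @ v) @ w)"
  by (metis append.assoc reduce_append_left)

lemma length_rstep: "length (rstep l x) \<le> Suc (length x)"
  by (auto simp: rstep_def split: list.splits)

lemma length_reduce: "length (reduce w) \<le> length w"
  by (induction w) (auto simp: reduce_Cons intro: order_trans[OF length_rstep])

lemma set_rstep: "set (rstep l x) \<subseteq> insert l (set x)"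
  by (auto simp: rstep_def split: list.splits)

lemma set_reduce: "set (reduce w) \<subseteq> set w"
  by (induction w) (use set_rstep in \<open>fastforce simp: reduce_Cons\<close>)+

lemma reduce_prefix:
  "reduce w = p @ s \<Longrightarrow> \<exists>q t. w = q @ t \<and> reduce q = p"
proof (induction w arbitrary: p s)
  case Nil then show ?case by simp
next
  case (Cons l w)
  show ?case
  proof (cases "p = []")
    case True then show ?thesis by (intro exI[of _ "[]"] exI[of _ "l # w"]) auto
  next
    case pne: False
    show ?thesis
    proof (cases "reduce w")
      case Nil
      then have "p = [l]" using Cons.prems pne by (cases p) (auto simp: reduce_Cons rstep_def)
      then show ?thesis using Nil
        by (intro exI[of _ "l # w"] exI[of _ "[]"]) (auto simp: reduce_Cons rstep_def)
    next
      case Cons2: (Cons m v)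
      show ?thesis
      proof (cases "m = inv_letter l")
        case True
        then have "reduce w = (m # p) @ s" using Cons.prems Cons2 by (simp add: reduce_Cons rstep_def)
        from Cons.IH[OF this] obtain q t where "w = q @ t" "reduce q = m # p" by blast
        then show ?thesis using True
          by (intro exI[of _ "l # q"] exI[of _ t]) (simp add: reduce_Cons rstep_def)
      next
        case False
        then have "l # m # v = p @ s" using Cons.prems Cons2 by (simp add: reduce_Cons rstep_def)
        then obtain p' where p': "p = l # p'" "m # v = p' @ s" using pne by (cases p) auto
        then have "reduce w = p' @ s" using Cons2 by simp
        from Cons.IH[OF this] obtain q t where qt: "w = q @ t" "reduce q = p'" by blast
        have "rstep l p' = l # p'"
          using p'(2) False by (cases p') (auto simp: rstep_def)
        then show ?thesis using qt p'
          by (intro exI[of _ "l # q"] exI[of _ t]) (simp add: reduce_Cons)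
      qed
    qed
  qed
qed

lemma winv_Nil [simp]: "winv [] = []"
  by (simp add: winv_def)

lemma winv_Cons: "winv (l # w) = winv w @ [inv_letter l]"
  by (simp add: winv_def)

lemma winv_winv [simp]: "winv (winv w) = w"
  by (simp add: winv_def rev_map comp_def)

lemma length_winv [simp]: "length (winv w) = length w"
  by (simp add: winv_def)

lemma set_winv: "set (winv w) = inv_letter ` set w"
  by (simp add: winv_def)

lemma winv_append: "winv (u @ v) = winv v @ winv u"
  by (simp add: winv_def)

lemma reduce_winv_self: "reduce (winv w @ w) = []"
proof (induction w)
  case Nil then show ?case by simp
next
  case (Cons l w)
  have "reduce (inv_letter l # l # w) = reduce w"
    using rstep_cancel[OF reduced_reduce, of "inv_letter l"] by (simp add: reduce_Cons)
  then have "reduce (winv (l # w) @ l # w) = reduce (winv w @ reduce w)"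
    by (simp add: winv_Cons reduce_append_right[of "winv w" "inv_letter l # l # w"])
  then show ?case using Cons by (simp add: reduce_append_right[symmetric])
qed

lemma reduce_self_winv: "reduce (w @ winv w) = []"
  using reduce_winv_self[of "winv w"] by simp

lemma reduced_winv: "reduced w \<Longrightarrow> reduced (winv w)"
proof (induction w)
  case Nil then show ?case by simp
next
  case (Cons l w)
  have "reduced (winv w)" using Cons by (simp add: reduced_Cons)
  show ?case unfolding reduced_def winv_Cons
  proof (intro allI impI)
    fix i assume i: "Suc i < length (winv w @ [inv_letter l])"
    show "(winv w @ [inv_letter l]) ! Suc i \<noteq> inv_letter ((winv w @ [inv_letter l]) ! i)"
    proof (cases "Suc i < length w")
      case True then show ?thesis using \<open>reduced (winv w)\<close>
        by (auto simp: nth_append reduced_def)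
    next
      case False
      then have si: "Suc i = length w" and "w \<noteq> []" using i by auto
      then have "winv w ! i = inv_letter (hd w)"
        by (simp add: winv_def rev_nth hd_conv_nth)
      then show ?thesis using si Cons.prems \<open>w \<noteq> []\<close>
        by (auto simp: nth_append reduced_Cons)
    qed
  qed
qed

lemma reduce_winv: "reduce (winv w) = winv (reduce w)"
proof -
  have "reduce (winv w) = reduce (winv w @ reduce (w @ winv (reduce w)))"
    by (metis append_Nil2 reduce_append_left reduce_self_winv)
  also have "\<dots> = reduce (reduce (winv w @ w) @ winv (reduce w))"
    by (metis reduce_append_right reduce_append_assoc)
  also have "\<dots> = winv (reduce w)"
    by (simp add: reduce_winv_self reduce_id reduced_winv reduced_reduce)
  finally show ?thesis .
qed

lemma fmul_cancel_left: "reduced v \<Longrightarrow> fmul u (fmul (winv u) v) = v"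
  by (metis fmul_def append_Nil reduce_append_assoc reduce_append_right reduce_id
      reduce_self_winv winv_winv)

section \<open>The tree metric of a free group\<close>

definition fdist :: "word \<Rightarrow> word \<Rightarrow> nat" where
  "fdist u v = length (fmul (winv u) v)"

lemma fdist_commute: "fdist u v = fdist v u"
proof -
  have "winv (fmul (winv u) v) = fmul (winv v) u"
    by (simp add: fmul_def reduce_winv[symmetric] winv_append)
  then show ?thesis unfolding fdist_def by (metis length_winv)
qed

lemma fdist_triangle: "fdist u v \<le> fdist u w + fdist w v"
proof -
  have "reduce (w @ winv w @ v) = reduce v"
    by (simp add: reduce_append_assoc reduce_self_winv)
  then have "reduce (winv u @ v) = reduce (reduce (winv u @ w) @ reduce (winv w @ v))"
    by (metis append.assoc reduce_append_both reduce_append_right)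
  then show ?thesis
    unfolding fdist_def fmul_def
    by (metis length_append length_reduce)
qed

lemma fdist_snoc: "fdist p (p @ [l]) \<le> 1"
proof -
  have "reduce (winv p @ p @ [l]) = [l]"
    by (simp add: reduce_append_assoc reduce_winv_self reduce_Cons rstep_def)
  then show ?thesis by (simp add: fdist_def fmul_def)
qed

lemma fdist_le_length: "fdist u v \<le> length u + length v"
  unfolding fdist_def fmul_def using length_reduce[of "winv u @ v"] by simp

lemma FG_reduce: "set w \<subseteq> {l. fst l < k} \<Longrightarrow> reduce w \<in> FG k"
  using set_reduce[of w] by (auto simp: FG_def reduced_reduce)

lemma FG_fmul: "u \<in> FG k \<Longrightarrow> v \<in> FG k \<Longrightarrow> fmul u v \<in> FG k"
  unfolding fmul_def by (rule FG_reduce) (auto simp: FG_def)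

lemma FG_winv: "u \<in> FG k \<Longrightarrow> winv u \<in> FG k"
  by (auto simp: FG_def reduced_winv set_winv inv_letter_def)

lemma finite_FG_length_le: "finite {u \<in> FG k. length u \<le> n}"
proof (rule finite_subset)
  show "{u \<in> FG k. length u \<le> n} \<subseteq> {xs. set xs \<subseteq> {0..<k} \<times> UNIV \<and> length xs \<le> n}"
    by (auto simp: FG_def)
  show "finite {xs. set xs \<subseteq> {0..<k} \<times> (UNIV :: bool set) \<and> length xs \<le> n}"
    by (rule finite_lists_length_le) simp
qed

lemma gen_sub_FG: "X \<subseteq> FG k \<Longrightarrow> gen_sub X \<subseteq> FG k"
proof
  fix u assume X: "X \<subseteq> FG k" and "u \<in> gen_sub X"
  from this(2) show "u \<in> FG k" using X
    by (induction rule: gen_sub.induct) (auto intro: FG_fmul FG_winv, simp add: FG_def)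
qed

lemma foldr_fmul: "foldr fmul ws [] = reduce (concat ws)"
  by (induction ws) (simp_all add: fmul_def reduce_append_right[symmetric])

lemma reduce_concat_in_gen_sub:
  "set ws \<subseteq> X \<union> winv ` X \<Longrightarrow> reduce (concat ws) \<in> gen_sub X"
proof (induction ws)
  case Nil then show ?case by (simp add: gen_sub.one)
next
  case (Cons w ws)
  have "w \<in> gen_sub X" using Cons.prems by (auto intro: gen_sub.gen gen_sub.inv)
  moreover have "reduce (concat (w # ws)) = fmul w (reduce (concat ws))"
    by (simp add: fmul_def reduce_append_right[of w "concat ws", symmetric])
  ultimately show ?case using Cons by (auto intro: gen_sub.mul)
qed

lemma gen_sub_reduce_concat:
  assumes "X \<subseteq> FG k" "u \<in> gen_sub X"
  shows "\<exists>ws. set ws \<subseteq> X \<union> winv ` X \<and> u = reduce (concat ws)"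
  using assms(2)
proof (induction rule: gen_sub.induct)
  case one then show ?case by (intro exI[of _ "[]"]) simp
next
  case (gen s)
  have "reduce s = s" using gen assms(1) by (auto simp: FG_def intro: reduce_id)
  then show ?case using gen by (intro exI[of _ "[s]"]) auto
next
  case (mul u v)
  then obtain ws vs where "set ws \<subseteq> X \<union> winv ` X" "u = reduce (concat ws)"
     "set vs \<subseteq> X \<union> winv ` X" "v = reduce (concat vs)" by blast
  then show ?case
    by (intro exI[of _ "ws @ vs"])
      (simp add: fmul_def reduce_append_both[of "concat ws" "concat vs", symmetric])
next
  case (inv u)
  then obtain ws where ws: "set ws \<subseteq> X \<union> winv ` X" "u = reduce (concat ws)" by blast
  have "winv (concat ws) = concat (rev (map winv ws))"
    by (induction ws) (simp_all add: winv_append)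
  moreover have "set (rev (map winv ws)) \<subseteq> X \<union> winv ` X"
    using ws(1) by (force simp: image_iff)
  ultimately show ?case using ws
    by (intro exI[of _ "rev (map winv ws)"]) (simp add: reduce_winv[symmetric])
qed

section \<open>Finitely generated subgroups of free groups are undistorted\<close>

definition max_gen_length :: "word set \<Rightarrow> nat" where
  "max_gen_length X = Max (insert 0 (length ` (X \<union> winv ` X)))"

lemma length_le_max_gen_length:
  "finite X \<Longrightarrow> w \<in> X \<union> winv ` X \<Longrightarrow> length w \<le> max_gen_length X"
  unfolding max_gen_length_def by (intro Max_ge) auto

lemma wlS_exists:
  assumes "X \<subseteq> FG k" "u \<in> gen_sub X"
  shows "\<exists>ws. length ws = wlS X u \<and> set ws \<subseteq> X \<union> winv ` X \<and> foldr fmul ws [] = u"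
proof -
  from gen_sub_reduce_concat[OF assms] obtain ws
    where "set ws \<subseteq> X \<union> winv ` X" "u = reduce (concat ws)" by blast
  then have "\<exists>n ws. length ws = n \<and> set ws \<subseteq> X \<union> winv ` X \<and> foldr fmul ws [] = u"
    by (auto simp: foldr_fmul)
  then show ?thesis unfolding wlS_def by (rule LeastI_ex)
qed

lemma wlS_le:
  "set ws \<subseteq> X \<union> winv ` X \<Longrightarrow> foldr fmul ws [] = u \<Longrightarrow> wlS X u \<le> length ws"
  unfolding wlS_def by (rule Least_le) blast

lemma wlS_Nil: "wlS X [] = 0"
  using wlS_le[of "[]" X "[]"] by simp

lemma wlS_fmul_le:
  assumes X: "X \<subseteq> FG k" and u: "u \<in> gen_sub X" and v: "v \<in> gen_sub X"
  shows "wlS X (fmul u v) \<le> wlS X u + wlS X v"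
proof -
  obtain us where us: "length us = wlS X u" "set us \<subseteq> X \<union> winv ` X" "foldr fmul us [] = u"
    using wlS_exists[OF X u] by blast
  obtain vs where vs: "length vs = wlS X v" "set vs \<subseteq> X \<union> winv ` X" "foldr fmul vs [] = v"
    using wlS_exists[OF X v] by blast
  have "foldr fmul (us @ vs) [] = reduce (reduce (concat us) @ reduce (concat vs))"
    unfolding foldr_fmul by (simp add: reduce_append_both[symmetric])
  also have "\<dots> = fmul u v" using us(3) vs(3) by (simp add: foldr_fmul fmul_def)
  finally have "foldr fmul (us @ vs) [] = fmul u v" .
  then show ?thesis using wlS_le[of "us @ vs" X] us vs by simp
qed

lemma length_le_wlS:
  assumes "X \<subseteq> FG k" "finite X" "u \<in> gen_sub X"
  shows "length u \<le> max_gen_length X * wlS X u"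
proof -
  obtain ws where ws: "length ws = wlS X u" "set ws \<subseteq> X \<union> winv ` X" "foldr fmul ws [] = u"
    using wlS_exists[OF assms(1,3)] by blast
  have "length u \<le> length (concat ws)"
    using ws(3) length_reduce[of "concat ws"] by (simp add: foldr_fmul)
  also have "\<dots> \<le> max_gen_length X * length ws"
    using ws(2) length_le_max_gen_length[OF assms(2)]
    by (induction ws) (auto intro: add_mono)
  finally show ?thesis using ws(1) by simp
qed

lemma concat_prefix:
  "concat ws = q @ t \<Longrightarrow>
    \<exists>j t'. q = concat (take j ws) @ t' \<and> (t' = [] \<or> (\<exists>w\<in>set ws. length t' \<le> length w))"
proof (induction ws arbitrary: q)
  case Nil then show ?case by (intro exI[of _ 0] exI[of _ "[]"]) simp
next
  case (Cons w ws)
  then have "w @ concat ws = q @ t" by simp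
  then obtain us where "(w = q @ us \<and> us @ concat ws = t) \<or> (w @ us = q \<and> concat ws = us @ t)"
    by (auto simp: append_eq_append_conv2)
  then show ?case
  proof
    assume "w = q @ us \<and> us @ concat ws = t"
    then show ?thesis by (intro exI[of _ 0] exI[of _ q]) auto
  next
    assume a: "w @ us = q \<and> concat ws = us @ t"
    from Cons.IH[of us] a obtain j t' where "us = concat (take j ws) @ t'"
      "t' = [] \<or> (\<exists>w\<in>set ws. length t' \<le> length w)" by blast
    then show ?thesis using a by (intro exI[of _ "Suc j"] exI[of _ t']) auto
  qed
qed

text \<open>A reduced word u \<in> \<langle>X\<rangle> is the reduction of a product of generators, so each prefix of u
  is the reduction of a prefix of that product: an element of \<langle>X\<rangle> followed by a piece
  of a single generator.\<close>

lemma prefix_near_gen_sub: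
  assumes X: "X \<subseteq> FG k" "finite X" and u: "u \<in> gen_sub X"
  shows "\<exists>h\<in>gen_sub X. fdist h (take i u) \<le> max_gen_length X"
proof -
  obtain ws where ws: "set ws \<subseteq> X \<union> winv ` X" "u = reduce (concat ws)"
    using gen_sub_reduce_concat[OF X(1) u] by blast
  have "reduce (concat ws) = take i u @ drop i u" using ws by simp
  from reduce_prefix[OF this] obtain q t where qt: "concat ws = q @ t" "reduce q = take i u"
    by blast
  from concat_prefix[OF qt(1)] obtain j t' where jt: "q = concat (take j ws) @ t'"
     "t' = [] \<or> (\<exists>w\<in>set ws. length t' \<le> length w)" by blast
  let ?h = "reduce (concat (take j ws))"
  have h: "?h \<in> gen_sub X"
    using ws(1) by (intro reduce_concat_in_gen_sub) (meson order_trans set_take_subset)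
  have "reduce (winv ?h @ take i u) = reduce (winv ?h @ ?h @ t')"
    using qt(2) jt(1) reduce_append_left[of "concat (take j ws)" t']
    by (metis reduce_append_right)
  also have "\<dots> = reduce t'" by (simp add: reduce_append_assoc reduce_winv_self)
  finally have "fdist ?h (take i u) \<le> length t'"
    by (metis fdist_def fmul_def length_reduce)
  moreover have "length t' \<le> max_gen_length X"
    using jt(2) ws(1) length_le_max_gen_length[OF X(2)] by fastforce
  ultimately show ?thesis using h by (meson order_trans)
qed

lemma gen_sub_chain:
  assumes X: "X \<subseteq> FG k" "finite X" and u: "u \<in> gen_sub X"
  shows "\<exists>H. H 0 = [] \<and> H (length u) = u \<and> (\<forall>i. H i \<in> gen_sub X)
           \<and> (\<forall>i<length u. fdist (H i) (H (Suc i)) \<le> 2 * max_gen_length X + 1)"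
proof -
  let ?R = "max_gen_length X"
  obtain H0 where H0: "\<And>i. H0 i \<in> gen_sub X \<and> fdist (H0 i) (take i u) \<le> ?R"
    using prefix_near_gen_sub[OF X u] by metis
  define H where "H i = (if i = 0 then [] else if i = length u then u else H0 i)" for i
  have near: "fdist (H i) (take i u) \<le> ?R" for i
    using H0[of i] by (simp add: H_def fdist_def fmul_def reduce_winv_self)
  have step: "fdist (H i) (H (Suc i)) \<le> 2 * ?R + 1" if "i < length u" for i
  proof -
    have "take (Suc i) u = take i u @ [u ! i]" using that by (simp add: take_Suc_conv_app_nth)
    then have "fdist (take i u) (take (Suc i) u) \<le> 1" by (metis fdist_snoc)
    moreover have "fdist (take (Suc i) u) (H (Suc i)) \<le> ?R"
      using near[of "Suc i"] by (simp add: fdist_commute)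
    ultimately show ?thesis
      using near[of i] fdist_triangle[of "H i" "H (Suc i)" "take i u"]
        fdist_triangle[of "take i u" "H (Suc i)" "take (Suc i) u"] by linarith
  qed
  have "H i \<in> gen_sub X" for i using H0 u by (simp add: H_def gen_sub.one)
  with step show ?thesis by (intro exI[of _ H]) (simp add: H_def)
qed

lemma wlS_le_mult_length:
  assumes X: "X \<subseteq> FG k" "finite X"
  shows "\<exists>M. \<forall>u\<in>gen_sub X. wlS X u \<le> M * length u"
proof -
  define B where "B = {v \<in> gen_sub X. length v \<le> 2 * max_gen_length X + 1}"
  have "finite B"
    by (rule finite_subset[OF _ finite_FG_length_le]) (use gen_sub_FG[OF X(1)] B_def in blast)
  define M where "M = Max (insert 0 (wlS X ` B))"
  have M: "wlS X v \<le> M" if "v \<in> B" for v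
    using \<open>finite B\<close> that unfolding M_def by (intro Max_ge) auto
  have "wlS X u \<le> M * length u" if u: "u \<in> gen_sub X" for u
  proof -
    obtain H where H: "H 0 = []" "H (length u) = u" "\<And>i. H i \<in> gen_sub X"
      "\<And>i. i < length u \<Longrightarrow> fdist (H i) (H (Suc i)) \<le> 2 * max_gen_length X + 1"
      using gen_sub_chain[OF X u] by blast
    have "wlS X (H i) \<le> i * M" if "i \<le> length u" for i
      using that
    proof (induction i)
      case 0 then show ?case by (simp add: H(1) wlS_Nil)
    next
      case (Suc i)
      let ?D = "fmul (winv (H i)) (H (Suc i))"
      have D: "?D \<in> B"
        using H(3,4) Suc.prems by (simp add: B_def fdist_def gen_sub.mul gen_sub.inv)
      have "reduced (H (Suc i))" using gen_sub_FG[OF X(1)] H(3) by (auto simp: FG_def)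
      then have eq: "fmul (H i) ?D = H (Suc i)" by (rule fmul_cancel_left)
      have "wlS X (fmul (H i) ?D) \<le> wlS X (H i) + wlS X ?D"
        using wlS_fmul_le[OF X(1) H(3), of ?D] D by (simp add: B_def)
      then have "wlS X (H (Suc i)) \<le> wlS X (H i) + wlS X ?D" by (simp only: eq)
      then show ?case using Suc M[OF D] by simp
    qed
    from this[of "length u"] show ?thesis using H(2) by (simp add: mult.commute)
  qed
  then show ?thesis by blast
qed

lemma gen_sub_undistorted:
  assumes X: "X \<subseteq> FG k" "finite X"
  shows "\<exists>L>0. \<forall>u\<in>gen_sub X. length u \<le> L * wlS X u \<and> wlS X u \<le> L * length u"
proof -
  obtain M where M: "\<forall>u\<in>gen_sub X. wlS X u \<le> M * length u"
    using wlS_le_mult_length[OF X] by blast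
  let ?L = "max 1 (max (max_gen_length X) M)"
  have "length u \<le> ?L * wlS X u \<and> wlS X u \<le> ?L * length u" if u: "u \<in> gen_sub X" for u
  proof
    have "max_gen_length X * wlS X u \<le> ?L * wlS X u" by (rule mult_right_mono) auto
    then show "length u \<le> ?L * wlS X u" using length_le_wlS[OF X u] by linarith
    have "M * length u \<le> ?L * length u" by (rule mult_right_mono) auto
    then show "wlS X u \<le> ?L * length u" using M u by (meson order_trans)
  qed
  then show ?thesis by (intro exI[of _ ?L]) auto
qed

section \<open>The factor F_2(a,b) is isometrically embedded in G\<close>

text \<open>The substitution x \<mapsto> a, y \<mapsto> b kills every relator k(a,b) k(x,y)\<inverse> of G.\<close>

definition fold_letter :: "letter \<Rightarrow> letter" where
  "fold_letter l = (fst l mod 2, snd l)"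

lemma fold_letter_inv: "fold_letter (inv_letter l) = inv_letter (fold_letter l)"
  by (simp add: fold_letter_def inv_letter_def)

lemma map_fold_letter_winv: "map fold_letter (winv u) = winv (map fold_letter u)"
  by (simp add: winv_def rev_map fold_letter_inv)

lemma map_fold_letter_id: "\<forall>l\<in>set w. fst l < 2 \<Longrightarrow> map fold_letter w = w"
  by (induction w) (auto simp: fold_letter_def)

lemma map_fold_letter_to_xy: "\<forall>l\<in>set w. fst l < 2 \<Longrightarrow> map fold_letter (to_xy w) = w"
  by (induction w) (auto simp: fold_letter_def to_xy_def)

lemma reduce_map_fold_letter_rstep:
  "reduce (map fold_letter (rstep l x)) = rstep (fold_letter l) (reduce (map fold_letter x))"
proof (cases x)
  case Nil then show ?thesis by (simp add: rstep_def reduce_Cons)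
next
  case (Cons m x')
  show ?thesis
  proof (cases "m = inv_letter l")
    case True
    have "rstep (fold_letter l) (reduce (map fold_letter x))
        = rstep (fold_letter l) (rstep (inv_letter (fold_letter l)) (reduce (map fold_letter x')))"
      using Cons True by (simp add: reduce_Cons fold_letter_inv)
    also have "\<dots> = reduce (map fold_letter x')" by (rule rstep_cancel[OF reduced_reduce])
    finally show ?thesis using Cons True by (simp add: rstep_def)
  next
    case False then show ?thesis using Cons by (simp add: rstep_def reduce_Cons)
  qed
qed

lemma reduce_map_fold_letter_reduce:
  "reduce (map fold_letter (reduce w)) = reduce (map fold_letter w)"
  by (induction w) (simp_all add: reduce_Cons reduce_map_fold_letter_rstep)

lemma reduce_map_fold_letter_fmul:
  "reduce (map fold_letter (fmul u v))
    = reduce (reduce (map fold_letter u) @ reduce (map fold_letter v))"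
  by (simp add: fmul_def reduce_map_fold_letter_reduce reduce_append_both[symmetric])

lemma reduce_map_fold_letter_ncl4:
  assumes R: "\<forall>r\<in>R. reduce (map fold_letter r) = []" and u: "u \<in> ncl4 R"
  shows "reduce (map fold_letter u) = []"
  using u
proof (induction rule: ncl4.induct)
  case (rel r) then show ?case using R by blast
next
  case (mul u v) then show ?case by (simp add: reduce_map_fold_letter_fmul)
next
  case (inv u) then show ?case by (simp add: map_fold_letter_winv reduce_winv)
next
  case (conj u g)
  let ?g = "reduce (map fold_letter g)"
  have "reduce (map fold_letter (fmul (fmul g u) (winv g))) = reduce (reduce (?g @ []) @ winv ?g)"
    using conj.IH
    by (simp add: reduce_map_fold_letter_fmul map_fold_letter_winv reduce_winv)
  also have "\<dots> = []" by (simp add: reduce_self_winv reduce_append_left[symmetric])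
  finally show ?case .
qed simp

lemma reduce_map_fold_letter_amalg_rel:
  assumes K: "Kall g \<subseteq> F2" and u: "u \<in> amalg_rel g"
  shows "reduce (map fold_letter u) = []"
proof -
  have "reduce (map fold_letter (fmul k (winv (to_xy k)))) = []" if "k \<in> Kall g" for k
  proof -
    have "\<forall>l\<in>set k. fst l < 2" using K that by (auto simp: FG_def)
    then show ?thesis
      by (simp add: fmul_def reduce_map_fold_letter_reduce map_fold_letter_winv
          map_fold_letter_id map_fold_letter_to_xy reduce_self_winv)
  qed
  then show ?thesis
    using u unfolding amalg_rel_def by (intro reduce_map_fold_letter_ncl4) auto
qed

lemma wlG_exists:
  assumes "w \<in> F2"
  shows "\<exists>v. length v = wlG g w \<and> (\<forall>l\<in>set v. fst l < 4) \<and> fmul (winv w) (reduce v) \<in> amalg_rel g"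
proof -
  have "\<exists>n v. length v = n \<and> (\<forall>l\<in>set v. fst l < 4) \<and> fmul (winv w) (reduce v) \<in> amalg_rel g"
    using assms by (intro exI[of _ "length w"] exI[of _ w])
      (auto simp: FG_def reduce_id fmul_def reduce_winv_self amalg_rel_def intro: ncl4.one)
  then show ?thesis unfolding wlG_def by (rule LeastI_ex)
qed

lemma wlG_le_length: "w \<in> F2 \<Longrightarrow> wlG g w \<le> length w"
  unfolding wlG_def
  by (rule Least_le, rule exI[of _ w])
     (auto simp: FG_def reduce_id fmul_def reduce_winv_self amalg_rel_def intro: ncl4.one)

lemma length_le_wlG:
  assumes K: "Kall g \<subseteq> F2" and w: "w \<in> F2"
  shows "length w \<le> wlG g w"
proof -
  obtain v where v: "length v = wlG g w" "fmul (winv w) (reduce v) \<in> amalg_rel g"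
    using wlG_exists[OF w] by blast
  let ?z = "reduce (map fold_letter v)"
  have "\<forall>l\<in>set (winv w). fst l < 2" using FG_winv[OF w] by (auto simp: FG_def)
  then have "fmul (winv w) ?z = []"
    using reduce_map_fold_letter_amalg_rel[OF K v(2)]
    by (simp add: reduce_map_fold_letter_fmul reduce_map_fold_letter_reduce map_fold_letter_id
        fmul_def reduce_append_right[symmetric])
  then have "w = ?z"
    using fmul_cancel_left[OF reduced_reduce, of w "map fold_letter v"] w
    by (simp add: fmul_def FG_def reduce_id)
  then show ?thesis using v(1) length_reduce[of "map fold_letter v"] by simp
qed

lemma wlG_F2: "Kall g \<subseteq> F2 \<Longrightarrow> w \<in> F2 \<Longrightarrow> wlG g w = length w"
  using wlG_le_length length_le_wlG by (metis antisym)

section \<open>Ultralimits\<close>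

lemma ultrafilter_bounded_tendsto:
  fixes f :: "nat \<Rightarrow> real"
  assumes U: "nonprincipal_ultrafilter F" and bdd: "eventually (\<lambda>n. f n \<in> {A..B}) F"
  shows "\<exists>l. (f \<longlongrightarrow> l) F"
proof -
  let ?G = "filtermap f F"
  have "?G \<noteq> bot" using U by (simp add: nonprincipal_ultrafilter_def filtermap_bot_iff)
  moreover have "eventually (\<lambda>x. x \<in> {A..B}) ?G" using bdd by (simp add: eventually_filtermap)
  ultimately obtain x where x: "inf (nhds x) ?G \<noteq> bot"
    using compact_filter[THEN iffD1, OF compact_Icc, rule_format] by blast
  have "eventually (\<lambda>n. f n \<in> S) F" if S: "open S" "x \<in> S" for S
  proof (rule ccontr)
    assume "\<not> eventually (\<lambda>n. f n \<in> S) F"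
    then have "eventually (\<lambda>y. y \<notin> S) ?G"
      using U by (auto simp: nonprincipal_ultrafilter_def eventually_filtermap)
    moreover have "eventually (\<lambda>y. y \<in> S) (nhds x)" using S by (rule eventually_nhds_in_open)
    ultimately have "eventually (\<lambda>_. False) (inf (nhds x) ?G)"
      unfolding eventually_inf by blast
    then show False using x by (simp add: eventually_False)
  qed
  then show ?thesis unfolding tendsto_def by blast
qed

lemma ulim_eq: "nonprincipal_ultrafilter F \<Longrightarrow> (f \<longlongrightarrow> l) F \<Longrightarrow> ulim F f = (l :: real)"
  unfolding ulim_def nonprincipal_ultrafilter_def by (blast intro: tendsto_Lim)

lemma ulim_le_mult:
  fixes f g :: "nat \<Rightarrow> real"
  assumes U: "nonprincipal_ultrafilter F" and fg: "\<And>n. f n \<le> L * g n"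
    and f: "eventually (\<lambda>n. f n \<in> {A..B}) F" and g: "eventually (\<lambda>n. g n \<in> {A'..B'}) F"
  shows "ulim F f \<le> L * ulim F g"
proof -
  obtain lf lg where lf: "(f \<longlongrightarrow> lf) F" and lg: "(g \<longlongrightarrow> lg) F"
    using ultrafilter_bounded_tendsto[OF U f] ultrafilter_bounded_tendsto[OF U g] by blast
  have "F \<noteq> bot" using U by (simp add: nonprincipal_ultrafilter_def)
  then have "lf \<le> L * lg" by (rule tendsto_le[OF _ tendsto_mult_left[OF lg] lf]) (simp add: fg)
  then show ?thesis using ulim_eq[OF U lf] ulim_eq[OF U lg] by simp
qed

lemma cone_admissible_mono:
  assumes "cone_admissible F d g" "\<And>n. f n \<le> K * g n" "K \<ge> 0"
  shows "cone_admissible F d f"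
proof -
  obtain C where "eventually (\<lambda>n. g n \<le> C * d n) F"
    using assms(1) by (auto simp: cone_admissible_def)
  then have "eventually (\<lambda>n. f n \<le> (K * C) * d n) F"
    by eventually_elim (metis assms(2,3) mult.assoc mult_left_mono order_trans)
  then show ?thesis unfolding cone_admissible_def by blast
qed

lemma cone_admissible_add:
  assumes "cone_admissible F d f" "cone_admissible F d g"
  shows "cone_admissible F d (\<lambda>n. f n + g n)"
proof -
  obtain C1 C2 where "eventually (\<lambda>n. f n \<le> C1 * d n) F" "eventually (\<lambda>n. g n \<le> C2 * d n) F"
    using assms by (auto simp: cone_admissible_def)
  then have "eventually (\<lambda>n. f n + g n \<le> (C1 + C2) * d n) F"
    by eventually_elim (simp add: distrib_right add_mono)
  then show ?thesis unfolding cone_admissible_def by blast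
qed

lemma ulim_rescaled_bilipschitz:
  fixes a b :: "nat \<Rightarrow> nat"
  assumes U: "nonprincipal_ultrafilter F" and d: "\<forall>n. d n > 0" and "L > 0"
    and ab: "\<And>n. real (a n) \<le> L * real (b n)" and ba: "\<And>n. real (b n) \<le> L * real (a n)"
    and adm: "cone_admissible F d (\<lambda>n. real (a n))"
  shows "ulim F (\<lambda>n. real (a n) / d n) \<le> L * ulim F (\<lambda>n. real (b n) / d n)
       \<and> ulim F (\<lambda>n. real (b n) / d n) \<le> L * ulim F (\<lambda>n. real (a n) / d n)"
proof -
  obtain C where C: "eventually (\<lambda>n. real (a n) \<le> C * d n) F"
    using adm by (auto simp: cone_admissible_def)
  have a_bdd: "eventually (\<lambda>n. real (a n) / d n \<in> {0..C}) F"
    using C by eventually_elim (simp add: d[rule_format] pos_divide_le_eq less_imp_le)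
  have b_bdd: "eventually (\<lambda>n. real (b n) / d n \<in> {0..L * C}) F"
    using C
  proof eventually_elim
    case (elim n)
    have "real (b n) \<le> L * (C * d n)" using ba[of n] elim \<open>L > 0\<close> by (meson mult_left_mono
          less_eq_real_def order_trans)
    then show ?case by (simp add: d[rule_format] pos_divide_le_eq less_imp_le)
  qed
  have "real (a n) / d n \<le> L * (real (b n) / d n)"
    and "real (b n) / d n \<le> L * (real (a n) / d n)" for n
    using ab[of n] ba[of n] d[rule_format, of n] by (simp_all add: divide_right_mono)
  then show ?thesis
    using ulim_le_mult[OF U _ a_bdd b_bdd] ulim_le_mult[OF U _ b_bdd a_bdd] by blast
qed

lemma ulim_bilipschitz_lengths:
  fixes la lb :: "word \<Rightarrow> nat" and L :: nat
  assumes U: "nonprincipal_ultrafilter F" and d: "\<forall>n. d n > 0" and "L > 0"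
    and bil: "\<And>u. u \<in> K \<Longrightarrow> la u \<le> L * lb u \<and> lb u \<le> L * la u"
    and closed: "\<And>u v. u \<in> K \<Longrightarrow> v \<in> K \<Longrightarrow> fmul (winv u) v \<in> K"
    and subadd: "\<And>u v. u \<in> K \<Longrightarrow> v \<in> K \<Longrightarrow> la (fmul (winv u) v) \<le> la u + la v"
    and x: "\<forall>n. x n \<in> K" and y: "\<forall>n. y n \<in> K"
    and lb_x: "cone_admissible F d (\<lambda>n. real (lb (x n)))"
    and lb_y: "cone_admissible F d (\<lambda>n. real (lb (y n)))"
  shows "cone_admissible F d (\<lambda>n. real (la (x n)))
    \<and> ulim F (\<lambda>n. real (la (fmul (winv (x n)) (y n))) / d n)
        \<le> L * ulim F (\<lambda>n. real (lb (fmul (winv (x n)) (y n))) / d n)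
    \<and> ulim F (\<lambda>n. real (lb (fmul (winv (x n)) (y n))) / d n)
        \<le> L * ulim F (\<lambda>n. real (la (fmul (winv (x n)) (y n))) / d n)"
proof -
  have la_le: "real (la u) \<le> real L * real (lb u)"
    and lb_le: "real (lb u) \<le> real L * real (la u)" if "u \<in> K" for u
    using bil[OF that] by (metis of_nat_le_iff of_nat_mult)+
  have la_x: "cone_admissible F d (\<lambda>n. real (la (x n)))"
    and la_y: "cone_admissible F d (\<lambda>n. real (la (y n)))"
    using cone_admissible_mono[OF lb_x la_le[OF x[rule_format]] of_nat_0_le_iff]
      cone_admissible_mono[OF lb_y la_le[OF y[rule_format]] of_nat_0_le_iff] .
  define u where "u n = fmul (winv (x n)) (y n)" for n
  have u: "u n \<in> K" for n using closed x y by (simp add: u_def)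
  have "real (la (u n)) \<le> 1 * (real (la (x n)) + real (la (y n)))" for n
    using subadd x y by (simp add: u_def flip: of_nat_add)
  then have "cone_admissible F d (\<lambda>n. real (la (u n)))"
    by (rule cone_admissible_mono[OF cone_admissible_add[OF la_x la_y]]) simp
  with la_x show ?thesis
    using ulim_rescaled_bilipschitz[OF U d _ la_le[OF u] lb_le[OF u]] \<open>L > 0\<close>
    by (simp add: u_def)
qed

theorem proposition6p6:
  fixes g :: "nat \<Rightarrow> word"            (* g_n, n \<ge> 1 *)
    and h :: "nat \<Rightarrow> word"            (* h_{n+1} = h (n+1) *)
    and r :: "nat \<Rightarrow> nat \<Rightarrow> letter"  (* r n : the ray used at step n *)
    and c e :: "nat \<Rightarrow> letter"        (* c_{n+1}, d_{n+1} *)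
    and N :: "nat \<Rightarrow> nat"
    and S :: "word set"                 (* finite generating set of K_2 *)
    and F :: "nat filter"
    and d :: "nat \<Rightarrow> real"
  assumes g_F2: "\<forall>n\<ge>1. g n \<in> F2"
    and g1: "\<not> proper_power (g 1)"
    and no_powers: "\<forall>n\<ge>1. \<forall>m\<ge>1. replicate m gen_a \<notin> Kn g n \<and> replicate m gen_b \<notin> Kn g n"
    and step: "\<forall>n\<ge>1.
        g (Suc n) \<notin> Kn g n
      \<and> cyc_reduced (g (Suc n))
      \<and> gprod_set (g (Suc n)) (Kn g n)
          = (LEAST m. \<exists>k \<in> F2 - Kn g n. gprod_set k (Kn g n) = m)
      \<and> geod_ray (r n)
      \<and> (\<forall>r'. geod_ray r' \<longrightarrow> ray_gprod_set (r n) (Kn g n) \<le> ray_gprod_set r' (Kn g n))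
      \<and> h (Suc n) = ray_prefix (r n) (length (h (Suc n)))
      \<and> enat (gprod_set (h (Suc n)) (Kn g n)) = ray_gprod_set (r n) (Kn g n)
      \<and> length (h (Suc n)) = gprod_set (h (Suc n)) (Kn g n) + 1
      \<and> (\<forall>w \<in> Kn g n. \<forall>m. has_power_subword gen_a m w \<or> has_power_subword gen_b m w
            \<longrightarrow> 2 * m \<le> N n)
      \<and> N n > length (h (Suc n))
      \<and> fst (c (Suc n)) < 2 \<and> fst (e (Suc n)) < 2
      \<and> cyc_reduced (h (Suc n) @ [c (Suc n)] @ Uword (N n) @ [e (Suc n)])
      \<and> g (Suc n) = h (Suc n) @ [c (Suc n)] @ Uword (N n) @ [e (Suc n)]"
    and S_fin: "finite S"
    and S_sub: "S \<subseteq> Kn g 2"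
    and S_gen: "gen_sub S = Kn g 2"
    and ultra: "nonprincipal_ultrafilter F"
    and d_pos: "\<forall>n. d n > 0"
    and d_inf: "filterlim d at_top F"
  shows "\<exists>L>0. \<forall>x y. (\<forall>n. x n \<in> Kn g 2) \<longrightarrow> (\<forall>n. y n \<in> Kn g 2)
           \<longrightarrow> cone_admissible F d (\<lambda>n. real (wlS S (x n)))
           \<longrightarrow> cone_admissible F d (\<lambda>n. real (wlS S (y n)))
           \<longrightarrow> cone_admissible F d (\<lambda>n. real (wlG g (x n)))
             \<and> ulim F (\<lambda>n. real (distG g (x n) (y n)) / d n)
                 \<le> L * ulim F (\<lambda>n. real (distS S (x n) (y n)) / d n)
             \<and> ulim F (\<lambda>n. real (distS S (x n) (y n)) / d n)
                 \<le> L * ulim F (\<lambda>n. real (distG g (x n) (y n)) / d n)"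
proof -
  have "Kn g n \<subseteq> F2" for n
    unfolding Kn_def using g_F2 by (intro gen_sub_FG) auto
  then have K2: "Kn g 2 \<subseteq> F2" and Kall: "Kall g \<subseteq> F2"
    by (auto simp: Kall_def)
  have "S \<subseteq> F2" using S_sub K2 by (rule order_trans)
  from gen_sub_undistorted[OF this S_fin] obtain L :: nat where "L > 0"
    and L: "\<And>u. u \<in> Kn g 2 \<Longrightarrow> length u \<le> L * wlS S u \<and> wlS S u \<le> L * length u"
    unfolding S_gen by blast
  have wlG: "wlG g u = length u" if "u \<in> Kn g 2" for u
    using wlG_F2[OF Kall] K2 that by blast
  have closed: "fmul (winv u) v \<in> Kn g 2" if "u \<in> Kn g 2" "v \<in> Kn g 2" for u v
    using that unfolding S_gen[symmetric] by (intro gen_sub.mul gen_sub.inv)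
  show ?thesis
  proof (intro exI[of _ "real L"] conjI allI impI)
    fix x y :: "nat \<Rightarrow> word"
    assume "\<forall>n. x n \<in> Kn g 2" "\<forall>n. y n \<in> Kn g 2"
      "cone_admissible F d (\<lambda>n. real (wlS S (x n)))"
      "cone_admissible F d (\<lambda>n. real (wlS S (y n)))"
    with ulim_bilipschitz_lengths[OF ultra d_pos \<open>L > 0\<close> L closed fdist_le_length[unfolded fdist_def]]
    show "cone_admissible F d (\<lambda>n. real (wlG g (x n)))"
      and "ulim F (\<lambda>n. real (distG g (x n) (y n)) / d n)
             \<le> real L * ulim F (\<lambda>n. real (distS S (x n) (y n)) / d n)"
      and "ulim F (\<lambda>n. real (distS S (x n) (y n)) / d n)
             \<le> real L * ulim F (\<lambda>n. real (distG g (x n) (y n)) / d n)"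
      by (simp_all add: wlG closed distG_def distS_def)
  qed (use \<open>L > 0\<close> in simp)
qed

end
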